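(* Let $X$ be a Banach space, $\alpha$ a left tensorial norm on $\ell_\infty\otimes X$, and let $L$, $J$ be a Banach lattice and linear isometry $J\colon X\to L$ such that $\|\bigvee_{j=1}^k|Jy_j|\|=\alpha(\sum_{j=1}^k e_j\otimes y_j)$ for all $k$ and $y_1,\dots,y_k\in X$. Let $\alpha^*$ be the dual norm on $(\ell_\infty\otimes_\alpha X)^*$, where an operator $S\colon X\to\ell_1$ acts on $\ell_\infty\otimes X$ by $\langle S,\sum_j h_j\otimes x_j\rangle=\sum_j\langle h_j,Sx_j\rangle$. Then every bounded operator $T\colon J(X)\to\ell_1$ with $TJ\in(\ell_\infty\otimes_\alpha X)^*$ admits an extension $\tilde T\colon L\to\ell_1$ such that $\tilde T^*\colon\ell_\infty\to L^*$ is order bounded with $\|\tilde T^*\|_m=\alpha^*(TJ)$.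
   Context: All spaces are real. $(e_j)$ is the unit vector basis of $c_0\subseteq\ell_\infty$; $\ell_\infty\otimes_\alpha X$ is the completion of $\ell_\infty\otimes X$ under $\alpha$. A norm $\alpha$ on $Y\otimes X$ is left tensorial if $\alpha(y\otimes x)=\|y\|\|x\|$ and $\|T\otimes I_X\|\le\|T\|$ on $(Y\otimes X,\alpha)$ for every bounded $T\colon Y\to Y$. An operator $S$ from a Banach space $Y$ to a Banach lattice $M$ is order bounded if there is $z\in M$, $z\ge0$, with $|Sy|\le\|y\|z$ for all $y\in Y$; $\|S\|_m$ is the infimum of $\|z\|$ over such $z$. *)

theory Defs
  imports "HOL-Analysis.Analysis"
begin

class banach_lattice = banach + ordered_real_vector + lattice +
  assumes lattice_norm: "sup x (- x) \<le> sup y (- y) \<Longrightarrow> norm x \<le> norm y"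

definition labs :: "'a::banach_lattice \<Rightarrow> 'a" where
  "labs x = sup x (- x)"

definition dual_space :: "('l::banach_lattice \<Rightarrow> real) set" where
  "dual_space = {z. bounded_linear z}"

definition dual_le :: "('l::banach_lattice \<Rightarrow> real) \<Rightarrow> ('l \<Rightarrow> real) \<Rightarrow> bool" where
  "dual_le \<phi> \<psi> \<longleftrightarrow> (\<forall>w. 0 \<le> w \<longrightarrow> \<phi> w \<le> \<psi> w)"

text \<open>Modulus in L* (Riesz-Kantorovich formula): for w \<ge> 0,
  |\<phi>|(w) = sup { \<phi> v : |v| \<le> w }, extended by |\<phi>|(w) = |\<phi>|(w+) - |\<phi>|(w-).\<close>
definition dual_abs_pos :: "('l::banach_lattice \<Rightarrow> real) \<Rightarrow> 'l \<Rightarrow> real" where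
  "dual_abs_pos \<phi> w = Sup {\<phi> v | v. labs v \<le> w}"

definition dual_abs :: "('l::banach_lattice \<Rightarrow> real) \<Rightarrow> 'l \<Rightarrow> real" where
  "dual_abs \<phi> w = dual_abs_pos \<phi> (sup w 0) - dual_abs_pos \<phi> (sup (- w) 0)"

definition dual_ob_majorant :: "('y::real_normed_vector \<Rightarrow> 'l::banach_lattice \<Rightarrow> real) \<Rightarrow> ('l \<Rightarrow> real) \<Rightarrow> bool" where
  "dual_ob_majorant S z \<longleftrightarrow> z \<in> dual_space \<and> dual_le (\<lambda>_. 0) z \<and>
      (\<forall>y. dual_le (dual_abs (S y)) (\<lambda>w. norm y * z w))"

definition dual_order_bounded :: "('y::real_normed_vector \<Rightarrow> 'l::banach_lattice \<Rightarrow> real) \<Rightarrow> bool" where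
  "dual_order_bounded S \<longleftrightarrow> (\<exists>z. dual_ob_majorant S z)"

definition dual_mnorm :: "('y::real_normed_vector \<Rightarrow> 'l::banach_lattice \<Rightarrow> real) \<Rightarrow> real" where
  "dual_mnorm S = Inf {onorm z | z. dual_ob_majorant S z}"

text \<open>\<ell>_inf is the Banach space of bounded (continuous, nat being discrete) functions
  nat \<Rightarrow> real with the sup norm. The unit vector e_j (indices start at 0).\<close>
type_synonym linf = "nat \<Rightarrow>\<^sub>C real"

definition unit_vec :: "nat \<Rightarrow> linf" where
  "unit_vec j = Bcontfun (\<lambda>n. if n = j then 1 else 0)"

text \<open>\<ell>_1 is represented by absolutely summable sequences nat \<Rightarrow> real.\<close>
definition l1norm :: "(nat \<Rightarrow> real) \<Rightarrow> real" where
  "l1norm f = (\<Sum>n. \<bar>f n\<bar>)"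

definition l1_op :: "'a::real_normed_vector set \<Rightarrow> ('a \<Rightarrow> nat \<Rightarrow> real) \<Rightarrow> bool" where
  "l1_op A T \<longleftrightarrow>
     (\<forall>u\<in>A. summable (\<lambda>n. \<bar>T u n\<bar>)) \<and>
     (\<forall>u\<in>A. \<forall>v\<in>A. \<forall>a b. T (a *\<^sub>R u + b *\<^sub>R v) = (\<lambda>n. a * T u n + b * T v n)) \<and>
     (\<exists>C. \<forall>u\<in>A. l1norm (T u) \<le> C * norm u)"

definition l1_adjoint :: "('l \<Rightarrow> nat \<Rightarrow> real) \<Rightarrow> linf \<Rightarrow> 'l \<Rightarrow> real" where
  "l1_adjoint S h = (\<lambda>z. \<Sum>n. apply_bcontfun h n * S z n)"

text \<open>A tensor \<Sum>_j h_j \<otimes> x_j is given by a list of pairs (h_j, x_j); it is identified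
  with its image under the (injective) canonical map \<ell>_inf \<otimes> X \<rightarrow> \<ell>_inf(X),
  namely the sequence n \<mapsto> \<Sum>_j h_j(n) x_j.\<close>
definition tensor :: "(linf \<times> 'x::real_vector) list \<Rightarrow> nat \<Rightarrow> 'x" where
  "tensor l = (\<lambda>n. \<Sum>(h, x)\<leftarrow>l. apply_bcontfun h n *\<^sub>R x)"

definition tensors :: "(nat \<Rightarrow> 'x::real_vector) set" where
  "tensors = range tensor"

definition tensor_norm :: "((nat \<Rightarrow> 'x::real_normed_vector) \<Rightarrow> real) \<Rightarrow> bool" where
  "tensor_norm \<alpha> \<longleftrightarrow>
     (\<forall>u\<in>tensors. 0 \<le> \<alpha> u \<and> (\<alpha> u = 0 \<longleftrightarrow> u = (\<lambda>_. 0))) \<and>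
     (\<forall>u\<in>tensors. \<forall>v\<in>tensors. \<alpha> (\<lambda>n. u n + v n) \<le> \<alpha> u + \<alpha> v) \<and>
     (\<forall>u\<in>tensors. \<forall>c. \<alpha> (\<lambda>n. c *\<^sub>R u n) = \<bar>c\<bar> * \<alpha> u)"

definition left_tensorial :: "((nat \<Rightarrow> 'x::real_normed_vector) \<Rightarrow> real) \<Rightarrow> bool" where
  "left_tensorial \<alpha> \<longleftrightarrow> tensor_norm \<alpha> \<and>
     (\<forall>h x. \<alpha> (tensor [(h, x)]) = norm h * norm x) \<and>
     (\<forall>T :: linf \<Rightarrow> linf. bounded_linear T \<longrightarrow>
        (\<forall>l. \<alpha> (tensor (map (\<lambda>(h, x). (T h, x)) l)) \<le> onorm T * \<alpha> (tensor l)))"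

definition tpair :: "('x \<Rightarrow> nat \<Rightarrow> real) \<Rightarrow> (linf \<times> 'x) list \<Rightarrow> real" where
  "tpair S l = (\<Sum>(h, x)\<leftarrow>l. \<Sum>n. apply_bcontfun h n * S x n)"

definition in_alpha_dual :: "((nat \<Rightarrow> 'x::real_normed_vector) \<Rightarrow> real) \<Rightarrow> ('x \<Rightarrow> nat \<Rightarrow> real) \<Rightarrow> bool" where
  "in_alpha_dual \<alpha> S \<longleftrightarrow> (\<exists>C. \<forall>l. \<bar>tpair S l\<bar> \<le> C * \<alpha> (tensor l))"

definition alpha_dual :: "((nat \<Rightarrow> 'x::real_normed_vector) \<Rightarrow> real) \<Rightarrow> ('x \<Rightarrow> nat \<Rightarrow> real) \<Rightarrow> real" where
  "alpha_dual \<alpha> S = Sup {\<bar>tpair S l\<bar> | l. \<alpha> (tensor l) \<le> 1}"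

end

(*
  The extension comes from the Hahn-Banach theorem on the space of pairs (v, w), where v is a
  finitely supported L-valued sequence and w is in L.  With A = alpha*(TJ), the functional
  p(v, w) = A ||(sup_n |v_n| - w)^+|| is sublinear, and on the pairs ((J x_n)_n, 0) it dominates
  f = sum_n (T J x_n)_n = <TJ, sum_n e_n (x) x_n>, because ||sup_n |J x_n||| = alpha(sum_n e_n (x) x_n).
  A dominated linear extension g of f gives the coordinates (T' u)_n = g(delta_n u, 0) of the
  extension and the positive functional z(w) = -g(0, w) of norm at most A, which majorizes the
  adjoint of T'.
  Conversely, let z majorize the adjoint of T'.  Splitting w into pieces by the Riesz decomposition
  property gives |sum_{n<N} (T' v_n)_n| <= z(w) whenever all |v_n| <= w; taking v_n = J x_n and
  w = sup_{n<N} |J x_n| yields |<TJ, u>| <= ||z|| alpha(u), hence ||z|| >= A.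
*)

theory Submission
  imports Defs
begin

section \<open>Absolute values in Banach lattices\<close>

lemma labs_le_iff: "labs (v::'l::banach_lattice) \<le> w \<longleftrightarrow> - w \<le> v \<and> v \<le> w"
  unfolding labs_def by (metis le_sup_iff minus_le_iff)

lemma labs_bounds:
  fixes v :: "'l::banach_lattice"
  shows "v \<le> labs v" "- v \<le> labs v" "- labs v \<le> v"
  using labs_le_iff[of v "labs v"] by (auto simp: labs_def)

lemma labs_0 [simp]: "labs (0::'l::banach_lattice) = 0"
  unfolding labs_def by simp

lemma labs_uminus [simp]: "labs (- v::'l::banach_lattice) = labs v"
  unfolding labs_def by (simp add: sup_commute)

lemma labs_nonneg: "0 \<le> labs (v::'l::banach_lattice)"
proof -
  have "v + - v \<le> labs v + labs v"
    by (rule add_mono[OF labs_bounds(1,2)])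
  then have "0 \<le> (1/2::real) *\<^sub>R (labs v + labs v)"
    by (intro scaleR_nonneg_nonneg) simp_all
  then show ?thesis
    by (metis scaleR_half_double)
qed

lemma labs_of_nonneg: "0 \<le> (w::'l::banach_lattice) \<Longrightarrow> labs w = w"
  unfolding labs_def by (rule sup_absorb1) (meson neg_le_0_iff_le order_trans)

lemma norm_le_of_labs_le: "labs (v::'l::banach_lattice) \<le> w \<Longrightarrow> norm v \<le> norm w"
  using lattice_norm labs_of_nonneg[OF order_trans[OF labs_nonneg]] unfolding labs_def by metis

lemma norm_mono_nonneg: "0 \<le> (a::'l::banach_lattice) \<Longrightarrow> a \<le> b \<Longrightarrow> norm a \<le> norm b"
  by (rule norm_le_of_labs_le) (simp add: labs_of_nonneg)

lemma norm_labs [simp]: "norm (labs (v::'l::banach_lattice)) = norm v"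
proof -
  have "labs (labs v) = labs v"
    by (rule labs_of_nonneg[OF labs_nonneg])
  then show ?thesis
    using lattice_norm[of "labs v" v] lattice_norm[of v "labs v"] unfolding labs_def by auto
qed

lemma labs_le_0_imp_zero: "labs (v::'l::banach_lattice) \<le> 0 \<Longrightarrow> v = 0"
  using norm_le_of_labs_le[of v 0] by simp

lemma norm_sup_0_le: "norm (sup (a::'l::banach_lattice) 0) \<le> norm a"
proof -
  have "labs (sup a 0) \<le> labs a"
    by (simp add: labs_of_nonneg labs_bounds(1) labs_nonneg)
  then show ?thesis
    unfolding labs_def by (rule lattice_norm)
qed

lemma labs_add_le: "labs ((a::'l::banach_lattice) + b) \<le> labs a + labs b"
proof -
  have "a + b \<le> labs a + labs b"
    by (intro add_mono labs_bounds)
  moreover have "- (labs a + labs b) \<le> a + b"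
    using add_mono[OF labs_bounds(3) labs_bounds(3)] by simp
  ultimately show ?thesis
    unfolding labs_le_iff by simp
qed

lemma labs_scaleR_le: "labs (c *\<^sub>R (v::'l::banach_lattice)) \<le> \<bar>c\<bar> *\<^sub>R labs v"
proof -
  have le: "d *\<^sub>R v \<le> \<bar>d\<bar> *\<^sub>R labs v" for d
  proof (cases "0 \<le> d")
    case True
    then show ?thesis
      by (simp add: scaleR_left_mono labs_bounds(1))
  next
    case False
    then have "d *\<^sub>R v = \<bar>d\<bar> *\<^sub>R (- v)"
      by simp
    also have "\<dots> \<le> \<bar>d\<bar> *\<^sub>R labs v"
      by (rule scaleR_left_mono[OF labs_bounds(2)]) simp
    finally show ?thesis .
  qed
  show ?thesis
    unfolding labs_le_iff using le[of c] le[of "- c"] by (simp add: minus_le_iff)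
qed

lemma labs_scaleR_le_scaleR:
  assumes "labs (v::'l::banach_lattice) \<le> w" "\<bar>c\<bar> \<le> d"
  shows "labs (c *\<^sub>R v) \<le> d *\<^sub>R w"
proof -
  have "0 \<le> w"
    using labs_nonneg assms(1) by (rule order_trans)
  have "labs (c *\<^sub>R v) \<le> \<bar>c\<bar> *\<^sub>R labs v"
    by (rule labs_scaleR_le)
  also have "\<dots> \<le> \<bar>c\<bar> *\<^sub>R w"
    using assms(1) by (simp add: scaleR_left_mono)
  also have "\<dots> \<le> d *\<^sub>R w"
    using assms(2) \<open>0 \<le> w\<close> by (rule scaleR_right_mono)
  finally show ?thesis .
qed

lemma riesz_decomposition:
  fixes y w1 w2 :: "'l::banach_lattice"
  assumes "0 \<le> w1" "0 \<le> w2" "labs y \<le> w1 + w2"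
  obtains y1 y2 where "y = y1 + y2" "labs y1 \<le> w1" "labs y2 \<le> w2"
proof -
  have y: "- (w1 + w2) \<le> y" "y \<le> w1 + w2"
    using assms(3) unfolding labs_le_iff by auto
  define y1 where "y1 = sup (inf y w1) (- w1)"
  have "- w1 \<le> w1"
    using assms(1) by (meson neg_le_0_iff_le order_trans)
  then have y1: "labs y1 \<le> w1"
    unfolding labs_le_iff y1_def by (simp add: le_supI1)
  have "y - w2 \<le> inf y w1"
    using assms(2) y(2) by (simp add: diff_le_eq)
  then have "y - w2 \<le> y1"
    unfolding y1_def using sup_ge1 by (rule order_trans)
  moreover have "y1 \<le> y + w2"
  proof -
    have "inf y w1 \<le> y + w2"
      using assms(2) by (simp add: le_infI1)
    moreover have "- w1 \<le> y + w2"
      using y(1) by (simp add: algebra_simps)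
    ultimately show ?thesis
      unfolding y1_def by (rule sup_least)
  qed
  ultimately have "labs (y - y1) \<le> w2"
    unfolding labs_le_iff by (simp add: algebra_simps)
  with y1 show ?thesis
    by (intro that[of y1 "y - y1"]) simp_all
qed

lemma labs_le_as_difference:
  fixes y w :: "'l::banach_lattice"
  assumes "labs y \<le> w"
  obtains a b where "0 \<le> a" "0 \<le> b" "a + b = w" "a - b = y"
proof
  have "- w \<le> y" "y \<le> w"
    using assms unfolding labs_le_iff by auto
  then have "0 \<le> w + y" "0 \<le> w - y"
    by (metis add.commute le_minus_iff diff_ge_0_iff_ge diff_minus_eq_add)+
  then show "0 \<le> (1/2::real) *\<^sub>R (w + y)" "0 \<le> (1/2::real) *\<^sub>R (w - y)"
    by (simp_all only: scaleR_nonneg_nonneg)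
  show "(1/2::real) *\<^sub>R (w + y) + (1/2::real) *\<^sub>R (w - y) = w"
    by (simp add: scaleR_add_right[symmetric])
  show "(1/2::real) *\<^sub>R (w + y) - (1/2::real) *\<^sub>R (w - y) = y"
    by (simp add: scaleR_diff_right[symmetric])
qed

section \<open>Dominated extension of linear functionals\<close>

text \<open>Partial linear functionals are represented by their graphs, so that Zorn's lemma applies
  to chains ordered by inclusion.\<close>

definition dominated_linear_graph ::
    "'v::real_vector set \<Rightarrow> ('v \<Rightarrow> real) \<Rightarrow> 'v set \<Rightarrow> ('v \<Rightarrow> real) \<Rightarrow> ('v \<times> real) set \<Rightarrow> bool" where
  "dominated_linear_graph E p F f H \<longleftrightarrow>
     (\<forall>x a. (x, a) \<in> H \<longrightarrow> x \<in> E \<and> a \<le> p x) \<and>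
     (\<forall>x a y b. (x, a) \<in> H \<longrightarrow> (y, b) \<in> H \<longrightarrow> (x + y, a + b) \<in> H) \<and>
     (\<forall>x a c. (x, a) \<in> H \<longrightarrow> (c *\<^sub>R x, c * a) \<in> H) \<and>
     (\<forall>x\<in>F. (x, f x) \<in> H)"

definition graph_extend :: "('v::real_vector \<times> real) set \<Rightarrow> 'v \<Rightarrow> real \<Rightarrow> ('v \<times> real) set" where
  "graph_extend H x c = {(y + t *\<^sub>R x, a + t * c) | y a t. (y, a) \<in> H}"

lemma graph_extend_memI: "(y, a) \<in> H \<Longrightarrow> (y + t *\<^sub>R x, a + t * c) \<in> graph_extend H x c"
  unfolding graph_extend_def by blast

lemma dominated_linear_graph_Union:
  assumes "C \<noteq> {}" "chain\<^sub>\<subseteq> C" "\<And>H. H \<in> C \<Longrightarrow> dominated_linear_graph E p F f H"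
  shows "dominated_linear_graph E p F f (\<Union>C)"
  unfolding dominated_linear_graph_def
proof (intro conjI allI impI ballI)
  fix x a
  assume "(x, a) \<in> \<Union>C"
  then show "x \<in> E" "a \<le> p x"
    using assms(3) unfolding dominated_linear_graph_def by blast+
next
  fix x a y b
  assume "(x, a) \<in> \<Union>C" "(y, b) \<in> \<Union>C"
  then obtain X Y where XY: "X \<in> C" "(x, a) \<in> X" "Y \<in> C" "(y, b) \<in> Y"
    by auto
  moreover have "X \<subseteq> Y \<or> Y \<subseteq> X"
    using assms(2) XY unfolding chain_subset_def by blast
  ultimately have "(x, a) \<in> X \<union> Y" "(y, b) \<in> X \<union> Y" "X \<union> Y \<in> C"
    by (auto simp: Un_absorb1 Un_absorb2)
  then show "(x + y, a + b) \<in> \<Union>C"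
    using assms(3) unfolding dominated_linear_graph_def by blast
next
  fix x a c
  assume "(x, a) \<in> \<Union>C"
  then show "(c *\<^sub>R x, c * a) \<in> \<Union>C"
    using assms(3) unfolding dominated_linear_graph_def by blast
next
  fix x
  assume "x \<in> F"
  then show "(x, f x) \<in> \<Union>C"
    using assms(1,3) unfolding dominated_linear_graph_def by blast
qed

context
  fixes E :: "'v::real_vector set" and p :: "'v \<Rightarrow> real"
  assumes E: "subspace E"
    and p_add: "\<And>x y. x \<in> E \<Longrightarrow> y \<in> E \<Longrightarrow> p (x + y) \<le> p x + p y"
    and p_scale: "\<And>x c. x \<in> E \<Longrightarrow> c > 0 \<Longrightarrow> p (c *\<^sub>R x) \<le> c * p x"
begin

lemma sublinear_0: "p 0 = 0"
proof -
  have "p 0 \<le> p 0 + p 0"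
    using p_add[of 0 0] E by (simp add: subspace_0)
  moreover have "p ((1/2) *\<^sub>R 0) \<le> (1/2) * p 0"
    using p_scale[of 0 "1/2"] E by (simp add: subspace_0)
  ultimately show ?thesis
    by simp
qed

lemma dominated_linear_graph_unique:
  assumes "dominated_linear_graph E p F f H" "(x, a) \<in> H" "(x, b) \<in> H"
  shows "a = b"
proof -
  have "(x + (-1) *\<^sub>R x, a + (-1) * b) \<in> H" "(x + (-1) *\<^sub>R x, b + (-1) * a) \<in> H"
    using assms unfolding dominated_linear_graph_def by blast+
  then have "a - b \<le> p 0" "b - a \<le> p 0"
    using assms(1) unfolding dominated_linear_graph_def by fastforce+
  then show ?thesis
    using sublinear_0 by simp
qed

lemma dominated_linear_graph_extension_value:
  assumes H: "dominated_linear_graph E p F f H" "H \<noteq> {}" and x: "x \<in> E"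
  obtains c where "\<And>y a. (y, a) \<in> H \<Longrightarrow> a - p (y - x) \<le> c \<and> c \<le> p (y + x) - a"
proof -
  have H_E: "y \<in> E" "a \<le> p y" if "(y, a) \<in> H" for y a
    using H(1) that unfolding dominated_linear_graph_def by blast+
  have between: "a - p (y - x) \<le> p (y' + x) - a'" if "(y, a) \<in> H" "(y', a') \<in> H" for y a y' a'
  proof -
    have "(y + y', a + a') \<in> H"
      using H(1) that unfolding dominated_linear_graph_def by blast
    then have "a + a' \<le> p ((y - x) + (y' + x))"
      using H_E by (simp add: algebra_simps)
    also have "\<dots> \<le> p (y - x) + p (y' + x)"
      using H_E that x E by (intro p_add) (auto simp: subspace_diff subspace_add)
    finally show ?thesis
      by simp
  qed
  define S where "S = {a - p (y - x) | y a. (y, a) \<in> H}"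
  have "S \<noteq> {}"
    using H(2) unfolding S_def by auto
  moreover obtain y' a' where "(y', a') \<in> H"
    using H(2) by auto
  ultimately have "bdd_above S"
    using between unfolding S_def by (intro bdd_aboveI[of _ "p (y' + x) - a'"]) blast
  show ?thesis
  proof (rule that[of "Sup S"], rule conjI)
    fix y a
    assume ya: "(y, a) \<in> H"
    show "a - p (y - x) \<le> Sup S"
      using ya \<open>bdd_above S\<close> unfolding S_def by (auto intro!: cSup_upper)
    show "Sup S \<le> p (y + x) - a"
      using \<open>S \<noteq> {}\<close> between[OF _ ya] unfolding S_def by (auto intro!: cSup_least)
  qed
qed

lemma dominated_linear_graph_extension_dominated:
  assumes H: "dominated_linear_graph E p F f H" and x: "x \<in> E"
    and c: "\<And>y a. (y, a) \<in> H \<Longrightarrow> a - p (y - x) \<le> c \<and> c \<le> p (y + x) - a"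
    and ya: "(y, a) \<in> H"
  shows "a + t * c \<le> p (y + t *\<^sub>R x)"
proof -
  have scaled: "((1/s) *\<^sub>R y, (1/s) * a) \<in> H" for s
    using H ya unfolding dominated_linear_graph_def by blast
  have z: "y + t *\<^sub>R x \<in> E"
    using H ya x E unfolding dominated_linear_graph_def by (simp add: subspace_add subspace_scale)
  consider "t = 0" | "t > 0" | "t < 0"
    by linarith
  then show ?thesis
  proof cases
    case 1
    then show ?thesis
      using H ya unfolding dominated_linear_graph_def by simp
  next
    case 2
    have "c \<le> p ((1/t) *\<^sub>R y + x) - (1/t) * a"
      using c[OF scaled] by blast
    also have "(1/t) *\<^sub>R y + x = (1/t) *\<^sub>R (y + t *\<^sub>R x)"
      using 2 by (simp add: algebra_simps)
    also have "p \<dots> \<le> (1/t) * p (y + t *\<^sub>R x)"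
      using 2 z by (intro p_scale) simp_all
    finally have "t * c \<le> t * ((1/t) * p (y + t *\<^sub>R x) - (1/t) * a)"
      using 2 by (simp add: mult_left_mono)
    then show ?thesis
      using 2 by (simp add: algebra_simps)
  next
    case 3
    have "(1/(-t)) * a - p ((1/(-t)) *\<^sub>R y - x) \<le> c"
      using c[OF scaled] by blast
    moreover have "(1/(-t)) *\<^sub>R y - x = (1/(-t)) *\<^sub>R (y + t *\<^sub>R x)"
      using 3 by (simp add: algebra_simps)
    moreover have "p ((1/(-t)) *\<^sub>R (y + t *\<^sub>R x)) \<le> (1/(-t)) * p (y + t *\<^sub>R x)"
      using 3 z by (intro p_scale) simp_all
    ultimately have "(-t) * ((1/(-t)) * a - (1/(-t)) * p (y + t *\<^sub>R x)) \<le> (-t) * c"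
      using 3 by (intro mult_left_mono) simp_all
    then show ?thesis
      using 3 by (simp add: algebra_simps)
  qed
qed

lemma dominated_linear_graph_graph_extend:
  assumes H: "dominated_linear_graph E p F f H" and x: "x \<in> E"
    and c: "\<And>y a. (y, a) \<in> H \<Longrightarrow> a - p (y - x) \<le> c \<and> c \<le> p (y + x) - a"
  shows "dominated_linear_graph E p F f (graph_extend H x c)"
  unfolding dominated_linear_graph_def
proof (intro conjI allI impI ballI)
  fix z b
  assume "(z, b) \<in> graph_extend H x c"
  then obtain y a t where zb: "z = y + t *\<^sub>R x" "b = a + t * c" "(y, a) \<in> H"
    unfolding graph_extend_def by blast
  then show "z \<in> E" "b \<le> p z"
    using H x E dominated_linear_graph_extension_dominated[OF H x c zb(3)]
    unfolding dominated_linear_graph_def by (simp_all add: subspace_add subspace_scale)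
next
  fix z1 b1 z2 b2
  assume "(z1, b1) \<in> graph_extend H x c" "(z2, b2) \<in> graph_extend H x c"
  then obtain y1 a1 t1 y2 a2 t2 where
    "z1 = y1 + t1 *\<^sub>R x" "b1 = a1 + t1 * c" "(y1, a1) \<in> H"
    "z2 = y2 + t2 *\<^sub>R x" "b2 = a2 + t2 * c" "(y2, a2) \<in> H"
    unfolding graph_extend_def by blast
  moreover have "(y1 + y2, a1 + a2) \<in> H"
    using H calculation unfolding dominated_linear_graph_def by blast
  ultimately show "(z1 + z2, b1 + b2) \<in> graph_extend H x c"
    using graph_extend_memI[of "y1 + y2" "a1 + a2" H "t1 + t2" x c] by (simp add: algebra_simps)
next
  fix z b d
  assume "(z, b) \<in> graph_extend H x c"
  then obtain y a t where "z = y + t *\<^sub>R x" "b = a + t * c" "(y, a) \<in> H"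
    unfolding graph_extend_def by blast
  moreover have "(d *\<^sub>R y, d * a) \<in> H"
    using H calculation unfolding dominated_linear_graph_def by blast
  ultimately show "(d *\<^sub>R z, d * b) \<in> graph_extend H x c"
    using graph_extend_memI[of "d *\<^sub>R y" "d * a" H "d * t" x c] by (simp add: algebra_simps)
next
  fix z
  assume "z \<in> F"
  then have "(z, f z) \<in> H"
    using H unfolding dominated_linear_graph_def by blast
  then show "(z, f z) \<in> graph_extend H x c"
    using graph_extend_memI[of z "f z" H 0 x c] by simp
qed

lemma maximal_dominated_linear_graph_total:
  assumes H: "dominated_linear_graph E p F f H" "H \<noteq> {}"
    and max: "\<And>H'. dominated_linear_graph E p F f H' \<Longrightarrow> H \<subseteq> H' \<Longrightarrow> H' = H"
    and x: "x \<in> E"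
  shows "\<exists>a. (x, a) \<in> H"
proof -
  obtain c where c: "\<And>y a. (y, a) \<in> H \<Longrightarrow> a - p (y - x) \<le> c \<and> c \<le> p (y + x) - a"
    using dominated_linear_graph_extension_value[OF H x] by blast
  have "H \<subseteq> graph_extend H x c"
    using graph_extend_memI[of _ _ H 0 x c] by auto
  then have "graph_extend H x c = H"
    by (intro max dominated_linear_graph_graph_extend[OF H(1) x c])
  moreover obtain y a where "(y, a) \<in> H"
    using H(2) by auto
  then have "(0, 0) \<in> H"
    using H(1) unfolding dominated_linear_graph_def by (metis scale_zero_left mult_zero_left)
  then have "(x, c) \<in> graph_extend H x c"
    using graph_extend_memI[of 0 0 H 1 x c] by simp
  ultimately show ?thesis
    by auto
qed

end

lemma exists_maximal_dominated_linear_graph: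
  fixes f :: "'v::real_vector \<Rightarrow> real"
  assumes F: "subspace F" "F \<subseteq> E"
    and f_add: "\<And>x y. x \<in> F \<Longrightarrow> y \<in> F \<Longrightarrow> f (x + y) = f x + f y"
    and f_scale: "\<And>x c. x \<in> F \<Longrightarrow> f (c *\<^sub>R x) = c * f x"
    and f_le: "\<And>x. x \<in> F \<Longrightarrow> f x \<le> p x"
  shows "\<exists>M. dominated_linear_graph E p F f M \<and> M \<noteq> {} \<and>
    (\<forall>H. dominated_linear_graph E p F f H \<longrightarrow> M \<subseteq> H \<longrightarrow> H = M)"
proof -
  define \<G> where "\<G> = {H. dominated_linear_graph E p F f H}"
  have graph_f: "(\<lambda>x. (x, f x)) ` F \<in> \<G>"
    unfolding \<G>_def dominated_linear_graph_def
    using F f_le f_add f_scale by (auto simp: subspace_def)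
  have "\<exists>M\<in>\<G>. \<forall>H\<in>\<G>. M \<subseteq> H \<longrightarrow> H = M"
  proof (rule Zorn_Lemma2, intro ballI)
    fix C
    assume C: "C \<in> chains \<G>"
    show "\<exists>U\<in>\<G>. \<forall>H\<in>C. H \<subseteq> U"
    proof (cases "C = {}")
      case False
      then have "\<Union>C \<in> \<G>"
        using C dominated_linear_graph_Union[of C E p F f] unfolding chains_def \<G>_def by blast
      then show ?thesis
        by blast
    qed (use graph_f in blast)
  qed
  moreover have "M \<noteq> {}" if "dominated_linear_graph E p F f M" for M
    using that subspace_0[OF F(1)] unfolding dominated_linear_graph_def by blast
  ultimately show ?thesis
    unfolding \<G>_def by blast
qed

theorem hahn_banach_dominated_extension:
  fixes E :: "'v::real_vector set" and p f :: "'v \<Rightarrow> real"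
  assumes E: "subspace E"
    and p_add: "\<And>x y. x \<in> E \<Longrightarrow> y \<in> E \<Longrightarrow> p (x + y) \<le> p x + p y"
    and p_scale: "\<And>x c. x \<in> E \<Longrightarrow> c > 0 \<Longrightarrow> p (c *\<^sub>R x) \<le> c * p x"
    and F: "subspace F" "F \<subseteq> E"
    and f_add: "\<And>x y. x \<in> F \<Longrightarrow> y \<in> F \<Longrightarrow> f (x + y) = f x + f y"
    and f_scale: "\<And>x c. x \<in> F \<Longrightarrow> f (c *\<^sub>R x) = c * f x"
    and f_le: "\<And>x. x \<in> F \<Longrightarrow> f x \<le> p x"
  obtains g where "\<And>x. x \<in> F \<Longrightarrow> g x = f x" "\<And>x. x \<in> E \<Longrightarrow> g x \<le> p x"
    "\<And>x y. x \<in> E \<Longrightarrow> y \<in> E \<Longrightarrow> g (x + y) = g x + g y"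
    "\<And>x c. x \<in> E \<Longrightarrow> g (c *\<^sub>R x) = c * g x"
proof -
  obtain M where M: "dominated_linear_graph E p F f M" "M \<noteq> {}"
    and max: "\<forall>H. dominated_linear_graph E p F f H \<longrightarrow> M \<subseteq> H \<longrightarrow> H = M"
    using exists_maximal_dominated_linear_graph[OF F f_add f_scale f_le] by blast
  define g where "g x = (SOME a. (x, a) \<in> M)" for x
  have g_graph: "(x, g x) \<in> M" if "x \<in> E" for x
    unfolding g_def using maximal_dominated_linear_graph_total[OF E p_add p_scale M max[rule_format] that]
    by (rule someI_ex)
  have M_iff: "(x, a) \<in> M \<longleftrightarrow> x \<in> E \<and> a = g x" for x a
    using g_graph dominated_linear_graph_unique[OF E p_add p_scale M(1)] M(1)
    unfolding dominated_linear_graph_def by blast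
  show ?thesis
    by (rule that) (use M(1) in \<open>auto simp: dominated_linear_graph_def M_iff\<close>)
qed

section \<open>Finitely supported sequences\<close>

lemma apply_Bcontfun_nat:
  fixes f :: "nat \<Rightarrow> 'b::real_normed_vector"
  assumes "\<And>n. norm (f n) \<le> b"
  shows "apply_bcontfun (Bcontfun f) = f"
  by (rule Bcontfun_inverse, rule bcontfun_normI) (auto intro: assms)

definition seq_prefix :: "nat \<Rightarrow> (nat \<Rightarrow> 'b::real_normed_vector) \<Rightarrow> (nat \<Rightarrow>\<^sub>C 'b)" where
  "seq_prefix N v = Bcontfun (\<lambda>n. if n < N then v n else 0)"

definition seq_single :: "nat \<Rightarrow> 'b::real_normed_vector \<Rightarrow> (nat \<Rightarrow>\<^sub>C 'b)" where
  "seq_single n x = Bcontfun (\<lambda>m. if m = n then x else 0)"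

lemma seq_prefix_apply: "apply_bcontfun (seq_prefix N v) = (\<lambda>n. if n < N then v n else 0)"
  unfolding seq_prefix_def
  by (rule apply_Bcontfun_nat[of _ "\<Sum>m<N. norm (v m)"]) (auto intro!: member_le_sum sum_nonneg)

lemma seq_single_apply: "apply_bcontfun (seq_single n x) = (\<lambda>m. if m = n then x else 0)"
  unfolding seq_single_def by (rule apply_Bcontfun_nat[of _ "norm x"]) auto

lemma seq_single_add: "seq_single n (a + b) = seq_single n a + seq_single n b"
  by (rule bcontfun_eqI) (simp add: seq_single_apply)

lemma seq_single_scaleR: "seq_single n (c *\<^sub>R a) = c *\<^sub>R seq_single n a"
  by (rule bcontfun_eqI) (simp add: seq_single_apply)

lemma seq_prefix_Suc: "seq_prefix (Suc N) v = seq_prefix N v + seq_single N (v N)"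
  by (rule bcontfun_eqI) (auto simp: seq_prefix_apply seq_single_apply less_Suc_eq)

lemma unit_vec_apply: "apply_bcontfun (unit_vec j) n = (if n = j then 1 else 0)"
  unfolding unit_vec_def using apply_Bcontfun_nat[of "\<lambda>n. if n = j then 1::real else 0" 1] by simp

lemma
  fixes h :: linf
  assumes "summable (\<lambda>n. \<bar>a n\<bar>)"
  shows summable_bcontfun_mult: "summable (\<lambda>n. apply_bcontfun h n * a n)"
    and abs_suminf_bcontfun_mult_le: "\<bar>\<Sum>n. apply_bcontfun h n * a n\<bar> \<le> norm h * (\<Sum>n. \<bar>a n\<bar>)"
proof -
  have bound: "\<bar>apply_bcontfun h n * a n\<bar> \<le> norm h * \<bar>a n\<bar>" for n
    using norm_bounded[of h n] by (simp add: abs_mult mult_right_mono)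
  have dominant: "summable (\<lambda>n. norm h * \<bar>a n\<bar>)"
    using assms by (rule summable_mult)
  have abs_summable: "summable (\<lambda>n. \<bar>apply_bcontfun h n * a n\<bar>)"
    by (rule summable_comparison_test'[OF dominant, of 0]) (simp add: bound)
  then show "summable (\<lambda>n. apply_bcontfun h n * a n)"
    by (rule summable_rabs_cancel)
  have "\<bar>\<Sum>n. apply_bcontfun h n * a n\<bar> \<le> (\<Sum>n. \<bar>apply_bcontfun h n * a n\<bar>)"
    using abs_summable by (rule summable_rabs)
  also have "\<dots> \<le> (\<Sum>n. norm h * \<bar>a n\<bar>)"
    using abs_summable dominant bound by (intro suminf_le) auto
  also have "\<dots> = norm h * (\<Sum>n. \<bar>a n\<bar>)"
    using assms by (rule suminf_mult)
  finally show "\<bar>\<Sum>n. apply_bcontfun h n * a n\<bar> \<le> norm h * (\<Sum>n. \<bar>a n\<bar>)" .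
qed

definition fsupp :: "(nat \<Rightarrow>\<^sub>C 'b::real_normed_vector) \<Rightarrow> bool" where
  "fsupp v \<longleftrightarrow> (\<exists>N. \<forall>n\<ge>N. apply_bcontfun v n = 0)"

lemma fsupp_0: "fsupp 0"
  unfolding fsupp_def by simp

lemma fsupp_add: "fsupp u \<Longrightarrow> fsupp v \<Longrightarrow> fsupp (u + v)"
  unfolding fsupp_def by (metis (no_types) max.boundedE plus_bcontfun.rep_eq add_0)

lemma fsupp_scaleR: "fsupp u \<Longrightarrow> fsupp (c *\<^sub>R u)"
  unfolding fsupp_def by auto

lemma fsupp_seq_prefix: "fsupp (seq_prefix N v)"
  unfolding fsupp_def seq_prefix_apply by (rule exI[of _ N]) simp

lemma fsupp_seq_single: "fsupp (seq_single n a)"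
  unfolding fsupp_def seq_single_apply by (rule exI[of _ "Suc n"]) simp

definition abs_sup :: "(nat \<Rightarrow>\<^sub>C 'l::banach_lattice) \<Rightarrow> 'l" where
  "abs_sup v = Sup_fin (insert 0 (labs ` range (apply_bcontfun v)))"

lemma fsupp_finite_range: "fsupp v \<Longrightarrow> finite (range (apply_bcontfun v))"
proof -
  assume "fsupp v"
  then obtain N where N: "\<forall>n\<ge>N. apply_bcontfun v n = 0"
    unfolding fsupp_def by blast
  have "range (apply_bcontfun v) \<subseteq> insert 0 (apply_bcontfun v ` {..<N})"
  proof
    fix y
    assume "y \<in> range (apply_bcontfun v)"
    then obtain n where "y = apply_bcontfun v n"
      by blast
    then show "y \<in> insert 0 (apply_bcontfun v ` {..<N})"
      using N by (cases "n < N") auto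
  qed
  then show ?thesis
    by (rule finite_subset) simp
qed

lemma abs_sup_upper: "fsupp v \<Longrightarrow> labs (apply_bcontfun v n) \<le> abs_sup v"
  unfolding abs_sup_def by (rule Sup_fin.coboundedI) (auto simp: fsupp_finite_range)

lemma abs_sup_nonneg: "fsupp v \<Longrightarrow> 0 \<le> abs_sup v"
  unfolding abs_sup_def by (rule Sup_fin.coboundedI) (auto simp: fsupp_finite_range)

lemma abs_sup_least:
  "fsupp v \<Longrightarrow> 0 \<le> w \<Longrightarrow> (\<And>n. labs (apply_bcontfun v n) \<le> w) \<Longrightarrow> abs_sup v \<le> w"
  unfolding abs_sup_def by (rule Sup_fin.boundedI) (auto simp: fsupp_finite_range)

lemma abs_sup_0: "abs_sup (0 :: nat \<Rightarrow>\<^sub>C 'l::banach_lattice) = 0"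
  by (rule antisym[OF abs_sup_least abs_sup_nonneg]) (simp_all add: fsupp_0)

lemma abs_sup_eq_Sup_fin:
  assumes "N \<ge> 1" and N: "\<forall>n\<ge>N. apply_bcontfun v n = 0"
  shows "abs_sup v = Sup_fin ((\<lambda>j. labs (apply_bcontfun v j)) ` {..<N})"
proof (rule antisym)
  have v: "fsupp v"
    using N unfolding fsupp_def by blast
  define R where "R = Sup_fin ((\<lambda>j. labs (apply_bcontfun v j)) ` {..<N})"
  have upper: "labs (apply_bcontfun v j) \<le> R" if "j < N" for j
    unfolding R_def by (rule Sup_fin.coboundedI) (use that in auto)
  then have "0 \<le> R"
    using \<open>N \<ge> 1\<close> labs_nonneg order_trans by fastforce
  show "abs_sup v \<le> R"
    using v \<open>0 \<le> R\<close> by (rule abs_sup_least) (metis N upper labs_0 \<open>0 \<le> R\<close> not_less)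
  show "R \<le> abs_sup v"
    unfolding R_def using \<open>N \<ge> 1\<close> abs_sup_upper[OF v]
    by (intro Sup_fin.boundedI) (auto simp: lessThan_empty_iff)
qed

lemma abs_sup_add_le:
  assumes "fsupp u" "fsupp v"
  shows "abs_sup (u + v) \<le> abs_sup u + abs_sup v"
proof (rule abs_sup_least)
  show "fsupp (u + v)" "0 \<le> abs_sup u + abs_sup v"
    using assms by (simp_all add: fsupp_add abs_sup_nonneg)
  fix n
  have "labs (apply_bcontfun (u + v) n) \<le> labs (apply_bcontfun u n) + labs (apply_bcontfun v n)"
    by (simp add: labs_add_le)
  also have "\<dots> \<le> abs_sup u + abs_sup v"
    using assms by (intro add_mono abs_sup_upper)
  finally show "labs (apply_bcontfun (u + v) n) \<le> abs_sup u + abs_sup v" .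
qed

lemma abs_sup_scaleR_le:
  assumes "fsupp v"
  shows "abs_sup (c *\<^sub>R v) \<le> \<bar>c\<bar> *\<^sub>R abs_sup v"
proof (rule abs_sup_least)
  show "fsupp (c *\<^sub>R v)" "0 \<le> \<bar>c\<bar> *\<^sub>R abs_sup v"
    using assms by (simp_all add: fsupp_scaleR abs_sup_nonneg scaleR_nonneg_nonneg)
  show "labs (apply_bcontfun (c *\<^sub>R v) n) \<le> \<bar>c\<bar> *\<^sub>R abs_sup v" for n
    using labs_scaleR_le_scaleR[OF abs_sup_upper[OF assms]] by simp
qed

section \<open>Tensors and operators into \<ell>1\<close>

lemma tensor_Nil [simp]: "tensor [] = (\<lambda>n. 0)"
  unfolding tensor_def by simp

lemma tensor_Cons: "tensor ((h, x) # l) = (\<lambda>n. apply_bcontfun h n *\<^sub>R x + tensor l n)"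
  unfolding tensor_def by simp

lemma tensor_append: "tensor (l1 @ l2) = (\<lambda>n. tensor l1 n + tensor l2 n)"
  unfolding tensor_def by simp

lemma tensor_in_tensors: "tensor l \<in> tensors"
  unfolding tensors_def by simp

lemma tensor_unit_vecs:
  "tensor (map (\<lambda>j. (unit_vec j, u j)) [0..<N]) = (\<lambda>n. if n < N then u n else 0)"
proof (induction N)
  case (Suc N)
  show ?case
    by (rule ext) (auto simp: tensor_append Suc tensor_Cons unit_vec_apply less_Suc_eq)
qed simp

lemma tensor_map_truncation:
  assumes "\<And>h. apply_bcontfun (P h) = (\<lambda>n. if n < N then apply_bcontfun h n else 0)"
  shows "tensor (map (\<lambda>(h, x). (P h, x)) l) = (\<lambda>n. if n < N then tensor l n else 0)"
proof (induction l)
  case (Cons a l)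
  obtain h x where "a = (h, x)"
    by fastforce
  then show ?case
    by (simp add: tensor_Cons Cons assms fun_eq_iff)
qed (simp add: fun_eq_iff)

lemma tensor_map_snd_scaleR:
  "tensor (map (\<lambda>(h, x). (h, c *\<^sub>R x)) l) = (\<lambda>n. c *\<^sub>R tensor l n)"
proof (induction l)
  case (Cons a l)
  obtain h x where "a = (h, x)"
    by fastforce
  then show ?case
    by (simp add: tensor_Cons Cons algebra_simps)
qed simp

lemma l1_op_linear:
  "l1_op U T \<Longrightarrow> u \<in> U \<Longrightarrow> v \<in> U \<Longrightarrow> T (a *\<^sub>R u + b *\<^sub>R v) n = a * T u n + b * T v n"
  unfolding l1_op_def by auto

lemma l1_op_summable: "l1_op U T \<Longrightarrow> u \<in> U \<Longrightarrow> summable (\<lambda>n. \<bar>T u n\<bar>)"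
  unfolding l1_op_def by auto

lemma l1_op_scaleR: "l1_op U T \<Longrightarrow> u \<in> U \<Longrightarrow> T (c *\<^sub>R u) n = c * T u n"
  using l1_op_linear[of U T u u c 0 n] by simp

lemma l1_op_0: "l1_op U T \<Longrightarrow> u \<in> U \<Longrightarrow> T 0 n = 0"
  using l1_op_scaleR[of U T u 0 n] by simp

lemma l1_op_minus: "l1_op UNIV T \<Longrightarrow> T (- u) n = - T u n"
  using l1_op_scaleR[of UNIV T u "-1" n] by simp

lemma l1_op_comp_bounded_linear:
  assumes J: "bounded_linear J" and T: "l1_op (range J) T"
  shows "l1_op UNIV (T \<circ> J)"
  unfolding l1_op_def
proof (intro conjI ballI allI)
  show "summable (\<lambda>n. \<bar>(T \<circ> J) x n\<bar>)" for x
    using l1_op_summable[OF T] by simp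
  show "(T \<circ> J) (a *\<^sub>R x + b *\<^sub>R y) = (\<lambda>n. a * (T \<circ> J) x n + b * (T \<circ> J) y n)" for x y a b
    using l1_op_linear[OF T, of "J x" "J y"] J
    by (simp add: fun_eq_iff linear_add linear_scale bounded_linear.linear)
  obtain C where C: "\<And>u. u \<in> range J \<Longrightarrow> l1norm (T u) \<le> C * norm u"
    using T unfolding l1_op_def by blast
  obtain K where K: "\<And>x. norm (J x) \<le> norm x * K" "K > 0"
    using bounded_linear.pos_bounded[OF J] by blast
  show "\<exists>C'. \<forall>x\<in>UNIV. l1norm ((T \<circ> J) x) \<le> C' * norm x"
  proof (intro exI ballI)
    fix x
    have "l1norm (T (J x)) \<le> C * norm (J x)"
      using C by simp
    also have "\<dots> \<le> max C 0 * norm (J x)"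
      by (intro mult_right_mono) simp_all
    also have "\<dots> \<le> max C 0 * (K * norm x)"
      using K(1)[of x] by (intro mult_left_mono) (simp_all add: mult.commute)
    finally show "l1norm ((T \<circ> J) x) \<le> (max C 0 * K) * norm x"
      by (simp add: mult.assoc)
  qed
qed

lemma tpair_sums:
  assumes S: "l1_op UNIV S"
  shows "(\<lambda>n. S (tensor l n) n) sums tpair S l"
proof (induction l)
  case Nil
  then show ?case
    using l1_op_0[OF S] by (simp add: tpair_def)
next
  case (Cons a l)
  obtain h x where a: "a = (h, x)"
    by fastforce
  have "S (tensor (a # l) n) n = apply_bcontfun h n * S x n + S (tensor l n) n" for n
    unfolding a tensor_Cons using l1_op_linear[OF S, of x "tensor l n" "apply_bcontfun h n" 1] by simp
  moreover have "tpair S (a # l) = (\<Sum>n. apply_bcontfun h n * S x n) + tpair S l"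
    unfolding a tpair_def by simp
  moreover have "(\<lambda>n. apply_bcontfun h n * S x n) sums (\<Sum>n. apply_bcontfun h n * S x n)"
    using summable_bcontfun_mult[OF l1_op_summable[OF S]] by (rule summable_sums) simp
  ultimately show ?case
    using sums_add[OF _ Cons] by simp
qed

lemma tpair_map_snd_scaleR:
  assumes S: "l1_op UNIV S"
  shows "tpair S (map (\<lambda>(h, x). (h, c *\<^sub>R x)) l) = c * tpair S l"
proof -
  have "(\<lambda>n. c * S (tensor l n) n) sums tpair S (map (\<lambda>(h, x). (h, c *\<^sub>R x)) l)"
    using tpair_sums[OF S, of "map (\<lambda>(h, x). (h, c *\<^sub>R x)) l"]
    by (simp add: tensor_map_snd_scaleR l1_op_scaleR[OF S])
  moreover have "(\<lambda>n. c * S (tensor l n) n) sums (c * tpair S l)"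
    by (rule sums_mult[OF tpair_sums[OF S]])
  ultimately show ?thesis
    by (rule sums_unique2)
qed

lemma left_tensorial_imp_tensor_norm: "left_tensorial \<alpha> \<Longrightarrow> tensor_norm \<alpha>"
  unfolding left_tensorial_def by blast

lemma tensor_norm_nonneg: "tensor_norm \<alpha> \<Longrightarrow> 0 \<le> \<alpha> (tensor l)"
  using tensor_in_tensors[of l] unfolding tensor_norm_def by blast

lemma tensor_norm_zero: "tensor_norm \<alpha> \<Longrightarrow> \<alpha> (\<lambda>n. 0) = 0"
  using tensor_in_tensors[of "[]"] unfolding tensor_norm_def by auto

lemma tensor_norm_scaleR: "tensor_norm \<alpha> \<Longrightarrow> \<alpha> (\<lambda>n. c *\<^sub>R tensor l n) = \<bar>c\<bar> * \<alpha> (tensor l)"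
  using tensor_in_tensors[of l] unfolding tensor_norm_def by blast

lemma left_tensorial_truncate:
  assumes \<alpha>: "left_tensorial \<alpha>"
  shows "\<alpha> (\<lambda>n. if n < N then tensor l n else 0) \<le> \<alpha> (tensor l)"
proof -
  define P where "P h = seq_prefix N (apply_bcontfun h)" for h :: linf
  have P_apply: "apply_bcontfun (P h) = (\<lambda>n. if n < N then apply_bcontfun h n else 0)" for h
    unfolding P_def by (rule seq_prefix_apply)
  have P_bound: "norm (P h) \<le> norm h * 1" for h
    by simp (rule norm_bound, auto simp: P_apply, metis norm_bounded real_norm_def)
  have "bounded_linear P"
    by (rule bounded_linear_intro[OF _ _ P_bound]) (auto intro!: bcontfun_eqI simp: P_apply)
  then have "\<alpha> (tensor (map (\<lambda>(h, x). (P h, x)) l)) \<le> onorm P * \<alpha> (tensor l)"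
    using \<alpha> unfolding left_tensorial_def by blast
  also have "\<dots> \<le> \<alpha> (tensor l)"
    using onorm_bound[of 1 P] P_bound onorm_pos_le[OF \<open>bounded_linear P\<close>]
      tensor_norm_nonneg[OF left_tensorial_imp_tensor_norm[OF \<alpha>], of l]
    by (simp add: mult_left_le_one_le)
  finally show ?thesis
    unfolding tensor_map_truncation[OF P_apply] .
qed

lemma alpha_dual_le:
  assumes \<alpha>: "tensor_norm \<alpha>" and "\<And>l. \<bar>tpair S l\<bar> \<le> B * \<alpha> (tensor l)" "0 \<le> B"
  shows "alpha_dual \<alpha> S \<le> B"
  unfolding alpha_dual_def
proof (rule cSup_least)
  show "{\<bar>tpair S l\<bar> |l. \<alpha> (tensor l) \<le> 1} \<noteq> {}"
    using tensor_norm_zero[OF \<alpha>] by (auto intro!: exI[of _ "[]"])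
next
  fix x
  assume "x \<in> {\<bar>tpair S l\<bar> |l. \<alpha> (tensor l) \<le> 1}"
  then obtain l where l: "x = \<bar>tpair S l\<bar>" "\<alpha> (tensor l) \<le> 1"
    by blast
  have "x \<le> B * \<alpha> (tensor l)"
    using assms(2) l(1) by simp
  also have "\<dots> \<le> B"
    using l(2) assms(3) tensor_norm_nonneg[OF \<alpha>] by (simp add: mult_right_le_one_le)
  finally show "x \<le> B" .
qed

lemma
  assumes \<alpha>: "tensor_norm \<alpha>" and S: "l1_op UNIV S" and dual: "in_alpha_dual \<alpha> S"
  shows alpha_dual_nonneg: "0 \<le> alpha_dual \<alpha> S"
    and abs_tpair_le_alpha_dual: "\<bar>tpair S l\<bar> \<le> alpha_dual \<alpha> S * \<alpha> (tensor l)"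
proof -
  obtain C where C: "\<And>l. \<bar>tpair S l\<bar> \<le> C * \<alpha> (tensor l)"
    using dual unfolding in_alpha_dual_def by blast
  have "bdd_above {\<bar>tpair S l\<bar> |l. \<alpha> (tensor l) \<le> 1}"
  proof (rule bdd_aboveI[of _ "max C 0"])
    fix x
    assume "x \<in> {\<bar>tpair S l\<bar> |l. \<alpha> (tensor l) \<le> 1}"
    then obtain l where l: "x = \<bar>tpair S l\<bar>" "\<alpha> (tensor l) \<le> 1"
      by blast
    have "C * \<alpha> (tensor l) \<le> max C 0"
      using l(2) tensor_norm_nonneg[OF \<alpha>, of l]
      by (cases "C \<ge> 0") (simp_all add: mult_right_le_one_le mult_nonpos_nonneg)
    then show "x \<le> max C 0"
      using C[of l] l(1) by linarith
  qed
  then have upper: "\<bar>tpair S l\<bar> \<le> alpha_dual \<alpha> S" if "\<alpha> (tensor l) \<le> 1" for l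
    unfolding alpha_dual_def using that by (auto intro!: cSup_upper)
  show "0 \<le> alpha_dual \<alpha> S"
    using upper[of "[]"] tensor_norm_zero[OF \<alpha>] by simp
  show "\<bar>tpair S l\<bar> \<le> alpha_dual \<alpha> S * \<alpha> (tensor l)"
  proof (cases "\<alpha> (tensor l) = 0")
    case True
    then show ?thesis
      using C[of l] by simp
  next
    case False
    define a where "a = \<alpha> (tensor l)"
    have "a > 0"
      using False tensor_norm_nonneg[OF \<alpha>, of l] unfolding a_def by linarith
    define l' where "l' = map (\<lambda>(h, x). (h, (1/a) *\<^sub>R x)) l"
    have "\<alpha> (tensor l') = 1"
      using \<open>a > 0\<close> tensor_norm_scaleR[OF \<alpha>, of "1/a" l]
      unfolding l'_def tensor_map_snd_scaleR a_def by simp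
    then have "\<bar>(1/a) * tpair S l\<bar> \<le> alpha_dual \<alpha> S"
      using upper[of l'] unfolding l'_def tpair_map_snd_scaleR[OF S] by simp
    then show ?thesis
      using \<open>a > 0\<close> unfolding a_def[symmetric] by (simp add: abs_mult divide_le_eq mult.commute)
  qed
qed

section \<open>Majorants of adjoints\<close>

lemma dominated_decomposition_refine:
  fixes ks :: "('l::banach_lattice \<times> (nat \<Rightarrow> real)) list"
  assumes "\<forall>k\<in>set ks. 0 \<le> fst k \<and> (\<forall>n. \<bar>snd k n\<bar> \<le> 1)" "labs y \<le> (\<Sum>k\<leftarrow>ks. fst k)"
  shows "\<exists>ks'. (\<Sum>k\<leftarrow>ks'. fst k) = (\<Sum>k\<leftarrow>ks. fst k) \<and>
    (\<forall>k\<in>set ks'. 0 \<le> fst k \<and> (\<forall>n. \<bar>snd k n\<bar> \<le> 1)) \<and>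
    (\<forall>n. n \<noteq> N \<longrightarrow> (\<Sum>k\<leftarrow>ks'. snd k n *\<^sub>R fst k) = (\<Sum>k\<leftarrow>ks. snd k n *\<^sub>R fst k)) \<and>
    (\<Sum>k\<leftarrow>ks'. snd k N *\<^sub>R fst k) = y"
  using assms
proof (induction ks arbitrary: y)
  case Nil
  then have "y = 0"
    by (simp add: labs_le_0_imp_zero)
  then show ?case
    by (intro exI[of _ "[]"]) simp
next
  case (Cons k ks)
  obtain w c where k: "k = (w, c)"
    by fastforce
  define S where "S = (\<Sum>k\<leftarrow>ks. fst k)"
  have "0 \<le> S"
    unfolding S_def using Cons.prems(1) by (intro sum_list_nonneg) auto
  have w: "0 \<le> w" "labs y \<le> w + S"
    using Cons.prems k unfolding S_def by auto
  obtain y1 y2 where y: "y = y1 + y2" "labs y1 \<le> w" "labs y2 \<le> S"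
    using w(1) \<open>0 \<le> S\<close> w(2) by (rule riesz_decomposition)
  obtain ks'' where ks'':
    "(\<Sum>k\<leftarrow>ks''. fst k) = S" "\<forall>k\<in>set ks''. 0 \<le> fst k \<and> (\<forall>n. \<bar>snd k n\<bar> \<le> 1)"
    "\<forall>n. n \<noteq> N \<longrightarrow> (\<Sum>k\<leftarrow>ks''. snd k n *\<^sub>R fst k) = (\<Sum>k\<leftarrow>ks. snd k n *\<^sub>R fst k)"
    "(\<Sum>k\<leftarrow>ks''. snd k N *\<^sub>R fst k) = y2"
    using Cons.IH[of y2] Cons.prems(1) y(3) unfolding S_def by auto
  obtain a b where ab: "0 \<le> a" "0 \<le> b" "a + b = w" "a - b = y1"
    using y(2) by (rule labs_le_as_difference)
  have split: "d *\<^sub>R a + d *\<^sub>R b = d *\<^sub>R w" for d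
    using ab(3) by (simp add: scaleR_add_right[symmetric])
  show ?case
  proof (rule exI[of _ "(a, c(N := 1)) # (b, c(N := -1)) # ks''"], intro conjI allI impI)
    fix n
    assume "n \<noteq> N"
    then show "(\<Sum>k\<leftarrow>(a, c(N := 1)) # (b, c(N := -1)) # ks''. snd k n *\<^sub>R fst k)
        = (\<Sum>k\<leftarrow>k # ks. snd k n *\<^sub>R fst k)"
      using ks''(3) split[of "c n"] k by (simp add: add.assoc[symmetric])
  next
    show "(\<Sum>k\<leftarrow>(a, c(N := 1)) # (b, c(N := -1)) # ks''. snd k N *\<^sub>R fst k) = y"
      using ks''(4) ab(4) y(1) by (simp add: algebra_simps)
  qed (use ks'' ab Cons.prems(1) k S_def in \<open>auto simp: add.assoc[symmetric]\<close>)
qed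

lemma dominated_decomposition:
  fixes v :: "nat \<Rightarrow> 'l::banach_lattice"
  assumes "0 \<le> w" and "\<forall>n<N. labs (v n) \<le> w"
  shows "\<exists>ks. (\<Sum>k\<leftarrow>ks. fst k) = w \<and> (\<forall>k\<in>set ks. 0 \<le> fst k \<and> (\<forall>n. \<bar>snd k n\<bar> \<le> 1)) \<and>
     (\<forall>n<N. v n = (\<Sum>k\<leftarrow>ks. snd k n *\<^sub>R fst k))"
  using assms(2)
proof (induction N)
  case 0
  show ?case
    by (rule exI[of _ "[(w, \<lambda>_. 0)]"]) (simp add: assms(1))
next
  case (Suc N)
  then obtain ks where ks: "(\<Sum>k\<leftarrow>ks. fst k) = w" "\<forall>k\<in>set ks. 0 \<le> fst k \<and> (\<forall>n. \<bar>snd k n\<bar> \<le> 1)"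
    "\<forall>n<N. v n = (\<Sum>k\<leftarrow>ks. snd k n *\<^sub>R fst k)"
    by auto
  obtain ks' where ks':
    "(\<Sum>k\<leftarrow>ks'. fst k) = w" "\<forall>k\<in>set ks'. 0 \<le> fst k \<and> (\<forall>n. \<bar>snd k n\<bar> \<le> 1)"
    "\<forall>n. n \<noteq> N \<longrightarrow> (\<Sum>k\<leftarrow>ks'. snd k n *\<^sub>R fst k) = (\<Sum>k\<leftarrow>ks. snd k n *\<^sub>R fst k)"
    "(\<Sum>k\<leftarrow>ks'. snd k N *\<^sub>R fst k) = v N"
    using dominated_decomposition_refine[OF ks(2), of "v N" N] Suc.prems ks(1) by auto
  have "v n = (\<Sum>k\<leftarrow>ks'. snd k n *\<^sub>R fst k)" if "n < Suc N" for n
    using that ks(3) ks'(3,4) by (cases "n = N") auto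
  then show ?case
    using ks' by blast
qed

lemma l1_adjoint_0: "l1_op UNIV T \<Longrightarrow> l1_adjoint T h 0 = 0"
  unfolding l1_adjoint_def using l1_op_0[of UNIV T] by simp

lemma abs_l1_adjoint_le:
  assumes T: "l1_op UNIV T"
  obtains K where "\<And>h u. \<bar>l1_adjoint T h u\<bar> \<le> norm h * (K * norm u)" "K \<ge> 0"
proof -
  obtain C where C: "\<And>u. l1norm (T u) \<le> C * norm u"
    using T unfolding l1_op_def by blast
  have "\<bar>l1_adjoint T h u\<bar> \<le> norm h * (max C 0 * norm u)" for h u
  proof -
  have "\<bar>l1_adjoint T h u\<bar> \<le> norm h * l1norm (T u)"
    unfolding l1_adjoint_def l1norm_def by (rule abs_suminf_bcontfun_mult_le[OF l1_op_summable[OF T]]) simp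
  also have "\<dots> \<le> norm h * (max C 0 * norm u)"
    using C[of u] mult_right_mono[of C "max C 0" "norm u"] by (intro mult_left_mono) simp_all
  finally show ?thesis .
  qed
  then show ?thesis
    by (rule that) simp
qed

lemma dual_abs_pos_upper:
  assumes "labs v \<le> w" "\<And>u. labs u \<le> w \<Longrightarrow> \<psi> u \<le> B"
  shows "\<psi> v \<le> dual_abs_pos \<psi> w"
  unfolding dual_abs_pos_def by (rule cSup_upper) (use assms in \<open>auto intro!: bdd_aboveI[of _ B]\<close>)

lemma dual_abs_pos_least:
  assumes "0 \<le> w" "\<And>u. labs u \<le> w \<Longrightarrow> \<psi> u \<le> B"
  shows "dual_abs_pos \<psi> w \<le> B"
  unfolding dual_abs_pos_def by (rule cSup_least) (use assms in \<open>auto intro!: exI[of _ 0]\<close>)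

lemma dual_abs_of_nonneg:
  assumes "0 \<le> w" "\<psi> 0 = 0"
  shows "dual_abs \<psi> w = dual_abs_pos \<psi> w"
proof -
  have "{\<psi> v | v. labs v \<le> 0} = {0}"
    using assms(2) labs_le_0_imp_zero by force
  then have "dual_abs_pos \<psi> 0 = 0"
    unfolding dual_abs_pos_def by simp
  then show ?thesis
    using assms(1) unfolding dual_abs_def by (simp add: sup_absorb1 sup_absorb2)
qed

lemma dual_ob_majorantD:
  assumes "dual_ob_majorant S z"
  shows "bounded_linear z" "0 \<le> w \<Longrightarrow> 0 \<le> z w"
    "0 \<le> w \<Longrightarrow> dual_abs (S y) w \<le> norm y * z w"
  using assms unfolding dual_ob_majorant_def dual_space_def dual_le_def by auto

lemma l1_adjoint_le_majorant:
  assumes T: "l1_op UNIV T" and z: "dual_ob_majorant (l1_adjoint T) z" and v: "labs v \<le> w"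
  shows "l1_adjoint T h v \<le> norm h * z w"
proof -
  have "0 \<le> w"
    using labs_nonneg v by (rule order_trans)
  obtain K where K: "\<And>h u. \<bar>l1_adjoint T h u\<bar> \<le> norm h * (K * norm u)" "K \<ge> 0"
    using abs_l1_adjoint_le[OF T] by blast
  have "l1_adjoint T h u \<le> norm h * (K * norm w)" if "labs u \<le> w" for u
    using K(1)[of h u] norm_le_of_labs_le[OF that] K(2)
    by (smt (verit) mult_left_mono norm_ge_zero)
  then have "l1_adjoint T h v \<le> dual_abs_pos (l1_adjoint T h) w"
    by (rule dual_abs_pos_upper[OF v])
  also have "\<dots> = dual_abs (l1_adjoint T h) w"
    using dual_abs_of_nonneg[of w "l1_adjoint T h", OF \<open>0 \<le> w\<close> l1_adjoint_0[OF T]] by simp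
  also have "\<dots> \<le> norm h * z w"
    using dual_ob_majorantD(3)[OF z \<open>0 \<le> w\<close>] .
  finally show ?thesis .
qed

lemma majorant_pieces_sum_le:
  fixes T :: "'l::banach_lattice \<Rightarrow> nat \<Rightarrow> real"
  assumes T: "l1_op UNIV T" and z: "dual_ob_majorant (l1_adjoint T) z"
    and "\<forall>k\<in>set ks. 0 \<le> fst k \<and> (\<forall>n. \<bar>snd k n\<bar> \<le> 1)"
  shows "(\<Sum>n<N. T (\<Sum>k\<leftarrow>ks. snd k n *\<^sub>R fst k) n) \<le> z (\<Sum>k\<leftarrow>ks. fst k)"
  using assms(3)
proof (induction ks)
  case Nil
  then show ?case
    using l1_op_0[OF T] linear_0[OF bounded_linear.linear[OF dual_ob_majorantD(1)[OF z]]] by simp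
next
  case (Cons k ks)
  obtain w c where k: "k = (w, c)"
    by fastforce
  have "0 \<le> w" "\<And>n. \<bar>c n\<bar> \<le> 1"
    using Cons.prems k by auto
  define h :: linf where "h = seq_prefix N c"
  have h_apply: "apply_bcontfun h = (\<lambda>n. if n < N then c n else 0)"
    unfolding h_def by (rule seq_prefix_apply)
  have "norm h \<le> 1"
    by (rule norm_bound) (simp add: h_apply \<open>\<And>n. \<bar>c n\<bar> \<le> 1\<close>)
  have "(\<Sum>n<N. c n * T w n) = l1_adjoint T h w"
    unfolding l1_adjoint_def h_apply by (subst suminf_finite[of "{..<N}"]) auto
  also have "\<dots> \<le> norm h * z w"
    using \<open>0 \<le> w\<close> by (intro l1_adjoint_le_majorant[OF T z]) (simp add: labs_of_nonneg)
  also have "\<dots> \<le> z w"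
    using \<open>norm h \<le> 1\<close> dual_ob_majorantD(2)[OF z \<open>0 \<le> w\<close>] by (simp add: mult_left_le_one_le)
  finally have "(\<Sum>n<N. c n * T w n) \<le> z w" .
  moreover have "(\<Sum>n<N. T (\<Sum>k\<leftarrow>ks. snd k n *\<^sub>R fst k) n) \<le> z (\<Sum>k\<leftarrow>ks. fst k)"
    using Cons by simp
  ultimately show ?case
    unfolding k using l1_op_linear[OF T, of w _ "c _" 1]
      linear_add[OF bounded_linear.linear[OF dual_ob_majorantD(1)[OF z]]]
    by (simp add: sum.distrib add_mono)
qed

text \<open>Each coordinate of the diagonal sum sees a different vector; the decomposition of
  \<open>w\<close> into pieces with common coefficients reduces it to single values of the adjoint.\<close>

lemma abs_diag_sum_le_majorant:
  fixes T :: "'l::banach_lattice \<Rightarrow> nat \<Rightarrow> real"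
  assumes T: "l1_op UNIV T" and z: "dual_ob_majorant (l1_adjoint T) z"
    and "0 \<le> w" "\<forall>n<N. labs (v n) \<le> w"
  shows "\<bar>\<Sum>n<N. T (v n) n\<bar> \<le> z w"
proof -
  have "(\<Sum>n<N. T (v n) n) \<le> z w" if v: "\<forall>n<N. labs (v n) \<le> w" for v
  proof -
    obtain ks where ks: "(\<Sum>k\<leftarrow>ks. fst k) = w" "\<forall>k\<in>set ks. 0 \<le> fst k \<and> (\<forall>n. \<bar>snd k n\<bar> \<le> 1)"
      "\<forall>n<N. v n = (\<Sum>k\<leftarrow>ks. snd k n *\<^sub>R fst k)"
      using dominated_decomposition[OF \<open>0 \<le> w\<close> v] by blast
    then show ?thesis
      using majorant_pieces_sum_le[OF T z ks(2), of N] by simp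
  qed
  from this[of v] this[of "\<lambda>n. - v n"] assms(4) show ?thesis
    by (simp add: l1_op_minus[OF T] sum_negf)
qed

lemma abs_tpair_le_majorant:
  assumes \<alpha>: "left_tensorial \<alpha>"
    and J_alpha: "\<And>k (y :: nat \<Rightarrow> 'x::real_normed_vector). k \<ge> 1 \<Longrightarrow>
      norm (Sup_fin ((\<lambda>j. labs (J (y j))) ` {..<k})) \<le> \<alpha> (tensor (map (\<lambda>j. (unit_vec j, y j)) [0..<k]))"
    and S: "l1_op UNIV S" and S_eq: "\<And>x. S x = T (J x)"
    and T: "l1_op UNIV T" and z: "dual_ob_majorant (l1_adjoint T) z"
  shows "\<bar>tpair S l\<bar> \<le> onorm z * \<alpha> (tensor l)"
proof -
  have partial_sums: "\<bar>\<Sum>n<N. S (tensor l n) n\<bar> \<le> onorm z * \<alpha> (tensor l)" if "N \<ge> 1" for N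
  proof -
    define W where "W = Sup_fin ((\<lambda>j. labs (J (tensor l j))) ` {..<N})"
    have W: "\<forall>n<N. labs (J (tensor l n)) \<le> W"
      unfolding W_def by (auto intro: Sup_fin.coboundedI)
    then have "0 \<le> W"
      using labs_nonneg \<open>N \<ge> 1\<close> by (meson less_le_trans order_trans zero_less_one)
    have "\<bar>\<Sum>n<N. S (tensor l n) n\<bar> \<le> z W"
      unfolding S_eq by (rule abs_diag_sum_le_majorant[OF T z \<open>0 \<le> W\<close> W])
    also have "\<dots> \<le> onorm z * norm W"
      using onorm[OF dual_ob_majorantD(1)[OF z], of W] by simp
    also have "\<dots> \<le> onorm z * \<alpha> (\<lambda>n. if n < N then tensor l n else 0)"
      using J_alpha[OF \<open>N \<ge> 1\<close>, of "tensor l"] onorm_pos_le[OF dual_ob_majorantD(1)[OF z]]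
      unfolding W_def tensor_unit_vecs by (rule mult_left_mono)
    also have "\<dots> \<le> onorm z * \<alpha> (tensor l)"
      using left_tensorial_truncate[OF \<alpha>] onorm_pos_le[OF dual_ob_majorantD(1)[OF z]]
      by (rule mult_left_mono)
    finally show ?thesis .
  qed
  have "(\<lambda>N. \<Sum>n<N. S (tensor l n) n) \<longlonglongrightarrow> tpair S l"
    using tpair_sums[OF S] unfolding sums_def .
  then show ?thesis
    by (rule LIMSEQ_le_const2[OF tendsto_rabs]) (use partial_sums in auto)
qed

lemma dual_mnorm_eqI:
  assumes "dual_ob_majorant S z" "onorm z \<le> A" "\<And>z'. dual_ob_majorant S z' \<Longrightarrow> A \<le> onorm z'"
  shows "dual_mnorm S = A"
proof -
  define M where "M = {onorm z' | z'. dual_ob_majorant S z'}"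
  have "onorm z \<in> M"
    unfolding M_def using assms(1) by blast
  moreover have "A \<le> m" if "m \<in> M" for m
    using that assms(3) unfolding M_def by blast
  ultimately have "Inf M \<le> A" "A \<le> Inf M"
    using assms(2) by (auto intro!: cInf_lower2 bdd_belowI cInf_greatest)
  then show ?thesis
    unfolding dual_mnorm_def M_def[symmetric] by simp
qed

section \<open>Construction of the extension\<close>

definition fin_supp_pairs :: "((nat \<Rightarrow>\<^sub>C 'l::banach_lattice) \<times> 'l) set" where
  "fin_supp_pairs = {x. fsupp (fst x)}"

definition excess_norm :: "(nat \<Rightarrow>\<^sub>C 'l::banach_lattice) \<times> 'l \<Rightarrow> real" where
  "excess_norm x = norm (sup (abs_sup (fst x) - snd x) 0)"

definition diagonal_domain :: "'l::banach_lattice set \<Rightarrow> ((nat \<Rightarrow>\<^sub>C 'l) \<times> 'l) set" where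
  "diagonal_domain U = {x. fsupp (fst x) \<and> snd x = 0 \<and> (\<forall>n. apply_bcontfun (fst x) n \<in> U)}"

definition diagonal_pairing :: "('l::real_normed_vector \<Rightarrow> nat \<Rightarrow> real) \<Rightarrow> (nat \<Rightarrow>\<^sub>C 'l) \<times> 'l \<Rightarrow> real" where
  "diagonal_pairing T x = (\<Sum>n. T (apply_bcontfun (fst x) n) n)"

lemma subspace_fin_supp_pairs: "subspace fin_supp_pairs"
  unfolding subspace_def fin_supp_pairs_def by (auto intro: fsupp_0 fsupp_add fsupp_scaleR)

lemma excess_norm_add:
  assumes "x \<in> fin_supp_pairs" "y \<in> fin_supp_pairs"
  shows "excess_norm (x + y) \<le> excess_norm x + excess_norm y"
proof -
  obtain u a v b where xy: "x = (u, a)" "y = (v, b)"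
    by (metis surj_pair)
  then have "fsupp u" "fsupp v"
    using assms unfolding fin_supp_pairs_def by auto
  have "abs_sup (u + v) - (a + b) \<le> (abs_sup u - a) + (abs_sup v - b)"
    using abs_sup_add_le[OF \<open>fsupp u\<close> \<open>fsupp v\<close>] by (simp add: algebra_simps)
  also have "\<dots> \<le> sup (abs_sup u - a) 0 + sup (abs_sup v - b) 0"
    by (intro add_mono sup_ge1)
  finally have "sup (abs_sup (u + v) - (a + b)) 0 \<le> sup (abs_sup u - a) 0 + sup (abs_sup v - b) 0"
    by (rule sup_least) (simp add: add_nonneg_nonneg)
  then have "excess_norm (x + y) \<le> norm (sup (abs_sup u - a) 0 + sup (abs_sup v - b) 0)"
    unfolding excess_norm_def xy by (simp add: norm_mono_nonneg)
  also have "\<dots> \<le> excess_norm x + excess_norm y"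
    unfolding excess_norm_def xy by (simp add: norm_triangle_ineq)
  finally show ?thesis .
qed

lemma excess_norm_scaleR:
  assumes "x \<in> fin_supp_pairs" "0 \<le> c"
  shows "excess_norm (c *\<^sub>R x) \<le> c * excess_norm x"
proof -
  obtain v w where x: "x = (v, w)"
    by (metis surj_pair)
  then have "fsupp v"
    using assms unfolding fin_supp_pairs_def by auto
  have "abs_sup (c *\<^sub>R v) - c *\<^sub>R w \<le> c *\<^sub>R (abs_sup v - w)"
    using abs_sup_scaleR_le[OF \<open>fsupp v\<close>, of c] assms(2) by (simp add: scaleR_diff_right)
  also have "\<dots> \<le> c *\<^sub>R sup (abs_sup v - w) 0"
    using assms(2) by (intro scaleR_left_mono) simp_all
  finally have le: "sup (abs_sup (c *\<^sub>R v) - c *\<^sub>R w) 0 \<le> c *\<^sub>R sup (abs_sup v - w) 0"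
    by (rule sup_least) (use assms(2) in \<open>simp add: scaleR_nonneg_nonneg\<close>)
  have "excess_norm (c *\<^sub>R x) = norm (sup (abs_sup (c *\<^sub>R v) - c *\<^sub>R w) 0)"
    unfolding excess_norm_def x by simp
  also have "\<dots> \<le> norm (c *\<^sub>R sup (abs_sup v - w) 0)"
    by (rule norm_mono_nonneg[OF sup_ge2 le])
  also have "\<dots> = c * excess_norm x"
    using assms(2) unfolding excess_norm_def x by simp
  finally show ?thesis .
qed

lemma subspace_diagonal_domain: "subspace U \<Longrightarrow> subspace (diagonal_domain U)"
  unfolding subspace_def diagonal_domain_def by (auto intro: fsupp_0 fsupp_add fsupp_scaleR)

lemma diagonal_domain_subset: "diagonal_domain U \<subseteq> fin_supp_pairs"
  unfolding diagonal_domain_def fin_supp_pairs_def by auto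

lemma diagonal_pairing_eq_sum:
  assumes "l1_op U T" "0 \<in> U" "\<forall>n\<ge>N. apply_bcontfun (fst x) n = 0"
  shows "diagonal_pairing T x = (\<Sum>n<N. T (apply_bcontfun (fst x) n) n)"
  unfolding diagonal_pairing_def using assms by (intro sums_unique[symmetric] sums_finite) (auto simp: l1_op_0)

context
  fixes U :: "'l::banach_lattice set" and T :: "'l \<Rightarrow> nat \<Rightarrow> real"
  assumes U: "subspace U" and T: "l1_op U T"
begin

lemma diagonal_pairing_linear:
  assumes "x \<in> diagonal_domain U" "y \<in> diagonal_domain U"
  shows "diagonal_pairing T (a *\<^sub>R x + b *\<^sub>R y) = a * diagonal_pairing T x + b * diagonal_pairing T y"
proof -
  obtain N1 N2 where "\<forall>n\<ge>N1. apply_bcontfun (fst x) n = 0" "\<forall>n\<ge>N2. apply_bcontfun (fst y) n = 0"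
    using assms unfolding diagonal_domain_def fsupp_def by blast
  then have "\<forall>n\<ge>max N1 N2. apply_bcontfun (fst x) n = 0 \<and> apply_bcontfun (fst y) n = 0"
    by simp
  moreover have "apply_bcontfun (fst x) n \<in> U" "apply_bcontfun (fst y) n \<in> U" for n
    using assms unfolding diagonal_domain_def by auto
  ultimately show ?thesis
    using subspace_0[OF U]
    by (simp add: diagonal_pairing_eq_sum[OF T, where N = "max N1 N2"] l1_op_linear[OF T]
        sum.distrib sum_distrib_left)
qed

lemma diagonal_pairing_seq_single:
  assumes "u \<in> U"
  shows "diagonal_pairing T (seq_single n u, 0) = T u n"
  using diagonal_pairing_eq_sum[OF T subspace_0[OF U], of "Suc n" "(seq_single n u, 0)"]
  by (simp add: seq_single_apply l1_op_0[OF T subspace_0[OF U]] lessThan_Suc)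

end

lemma diagonal_pairing_le_excess_norm:
  fixes J :: "'x::real_normed_vector \<Rightarrow> 'l::banach_lattice"
  assumes J: "linear J" and T: "l1_op (range J) T" and S: "l1_op UNIV (T \<circ> J)"
    and J_alpha: "\<And>k (y :: nat \<Rightarrow> 'x). k \<ge> 1 \<Longrightarrow>
      \<alpha> (tensor (map (\<lambda>j. (unit_vec j, y j)) [0..<k])) \<le> norm (Sup_fin ((\<lambda>j. labs (J (y j))) ` {..<k}))"
    and A: "0 \<le> A" "\<And>l. tpair (T \<circ> J) l \<le> A * \<alpha> (tensor l)"
    and x: "x \<in> diagonal_domain (range J)"
  shows "diagonal_pairing T x \<le> A * excess_norm x"
proof -
  define v where "v = fst x"
  have x_v: "x = (v, 0)" "fsupp v" "\<And>n. apply_bcontfun v n \<in> range J"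
    using x unfolding diagonal_domain_def v_def by (cases x; simp)+
  obtain N0 where "\<forall>n\<ge>N0. apply_bcontfun v n = 0"
    using x_v(2) unfolding fsupp_def by blast
  then have v: "x = (v, 0)" "\<forall>n\<ge>Suc N0. apply_bcontfun v n = 0" "Suc N0 \<ge> 1"
    using x_v(1) by simp_all
  define N where "N = Suc N0"
  define xs where "xs n = inv_into UNIV J (apply_bcontfun v n)" for n
  have xs: "J (xs n) = apply_bcontfun v n" for n
    unfolding xs_def using x_v(3) by (rule f_inv_into_f)
  note v = v[folded N_def]
  define l where "l = map (\<lambda>j. (unit_vec j, xs j)) [0..<N]"
  have "0 \<in> range J"
    using linear_0[OF J] by (metis rangeI)
  have "diagonal_pairing T x = (\<Sum>n<N. T (J (xs n)) n)"
    using diagonal_pairing_eq_sum[OF T \<open>0 \<in> range J\<close>, of N "(v, 0)"] v by (simp add: xs)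
  also have "\<dots> = tpair (T \<circ> J) l"
  proof -
    have l: "tensor l = (\<lambda>n. if n < N then xs n else 0)"
      unfolding l_def by (rule tensor_unit_vecs)
    have "(\<lambda>n. (T \<circ> J) (tensor l n) n) sums (\<Sum>n<N. (T \<circ> J) (tensor l n) n)"
      using l1_op_0[OF S, of 0] by (intro sums_finite) (simp_all add: l)
    moreover have "(\<Sum>n<N. (T \<circ> J) (tensor l n) n) = (\<Sum>n<N. T (J (xs n)) n)"
      by (simp add: l)
    ultimately show ?thesis
      using tpair_sums[OF S, of l] sums_unique2 by metis
  qed
  also have "\<dots> \<le> A * norm (Sup_fin ((\<lambda>j. labs (J (xs j))) ` {..<N}))"
    using A(2)[of l] J_alpha[OF v(3), of xs] A(1) unfolding l_def by (meson mult_left_mono order_trans)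
  also have "\<dots> = A * excess_norm x"
    using abs_sup_nonneg[OF x_v(2)] unfolding excess_norm_def xs abs_sup_eq_Sup_fin[OF v(3,2), symmetric] v(1)
    by (simp add: sup_absorb1)
  finally show ?thesis .
qed

locale dominated_functional =
  fixes g :: "(nat \<Rightarrow>\<^sub>C 'l::banach_lattice) \<times> 'l \<Rightarrow> real" and A :: real
  assumes A_nonneg: "0 \<le> A"
    and add: "x \<in> fin_supp_pairs \<Longrightarrow> y \<in> fin_supp_pairs \<Longrightarrow> g (x + y) = g x + g y"
    and scaleR: "x \<in> fin_supp_pairs \<Longrightarrow> g (c *\<^sub>R x) = c * g x"
    and dominated: "x \<in> fin_supp_pairs \<Longrightarrow> g x \<le> A * excess_norm x"
begin

definition extension :: "'l \<Rightarrow> nat \<Rightarrow> real" where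
  "extension u n = g (seq_single n u, 0)"

definition majorant :: "'l \<Rightarrow> real" where
  "majorant w = - g (0, w)"

lemma pair_add: "fsupp u \<Longrightarrow> fsupp v \<Longrightarrow> g (u + v, a + b) = g (u, a) + g (v, b)"
  using add[of "(u, a)" "(v, b)"] unfolding fin_supp_pairs_def by simp

lemma pair_scaleR: "fsupp u \<Longrightarrow> g (c *\<^sub>R u, c *\<^sub>R a) = c * g (u, a)"
  using scaleR[of "(u, a)" c] unfolding fin_supp_pairs_def by simp

lemma extension_linear: "extension (a *\<^sub>R u + b *\<^sub>R v) n = a * extension u n + b * extension v n"
  unfolding extension_def seq_single_add seq_single_scaleR
  using pair_add[of "a *\<^sub>R seq_single n u" "b *\<^sub>R seq_single n v" 0 0]
    pair_scaleR[of "seq_single n u" a 0] pair_scaleR[of "seq_single n v" b 0]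
  by (simp add: fsupp_scaleR fsupp_seq_single)

lemma g_seq_prefix: "g (seq_prefix N v, 0) = (\<Sum>n<N. extension (v n) n)"
proof (induction N)
  case 0
  have "seq_prefix 0 v = 0"
    by (rule bcontfun_eqI) (simp add: seq_prefix_apply)
  then show ?case
    using pair_scaleR[OF fsupp_0, of 0 0] by simp
next
  case (Suc N)
  then show ?case
    unfolding seq_prefix_Suc extension_def
    using pair_add[OF fsupp_seq_prefix fsupp_seq_single, of N v N "v N" 0 0] by simp
qed

text \<open>The pair \<open>(seq_prefix N v, w)\<close> has zero excess, so \<open>g\<close> is nonpositive on it.\<close>

lemma diag_sum_le_majorant:
  assumes "0 \<le> w" "\<forall>n<N. labs (v n) \<le> w"
  shows "(\<Sum>n<N. extension (v n) n) \<le> majorant w"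
proof -
  have "abs_sup (seq_prefix N v) \<le> w"
    using assms by (intro abs_sup_least) (simp_all add: fsupp_seq_prefix seq_prefix_apply)
  then have "g (seq_prefix N v, w) \<le> 0"
    using dominated[of "(seq_prefix N v, w)"]
    by (simp add: fin_supp_pairs_def fsupp_seq_prefix excess_norm_def sup_absorb2)
  moreover have "g (seq_prefix N v, 0) = g (seq_prefix N v, w) + g (0, - w)"
    using pair_add[OF fsupp_seq_prefix fsupp_0, of N v w "- w"] by simp
  moreover have "g (0, - w) = majorant w"
    unfolding majorant_def using pair_scaleR[OF fsupp_0, of "-1" w] by simp
  ultimately show ?thesis
    by (simp add: g_seq_prefix)
qed

lemma majorant_nonneg: "0 \<le> w \<Longrightarrow> 0 \<le> majorant w"
  using diag_sum_le_majorant[of w 0] by simp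

lemma abs_majorant_le: "\<bar>majorant w\<bar> \<le> A * norm w"
proof -
  have "g (0, w') \<le> A * norm (sup (- w') 0)" for w' :: 'l
    using dominated[of "(0, w')"] by (simp add: fin_supp_pairs_def fsupp_0 excess_norm_def abs_sup_0)
  moreover have "A * norm (sup (- w') 0) \<le> A * norm w'" for w' :: 'l
    using norm_sup_0_le[of "- w'"] A_nonneg by (simp add: mult_left_mono)
  ultimately have le: "g (0, w') \<le> A * norm w'" for w'
    by (rule order_trans)
  have "g (0, - w) = - g (0, w)"
    using pair_scaleR[OF fsupp_0, of "-1" w] by simp
  then show ?thesis
    unfolding majorant_def using le[of w] le[of "- w"] by simp
qed

lemma bounded_linear_majorant: "bounded_linear majorant"
proof (rule bounded_linear_intro)
  show "majorant (a + b) = majorant a + majorant b" for a b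
    unfolding majorant_def using pair_add[OF fsupp_0 fsupp_0, of a b] by simp
  show "majorant (c *\<^sub>R a) = c *\<^sub>R majorant a" for c a
    unfolding majorant_def using pair_scaleR[OF fsupp_0, of c a] by simp
  show "norm (majorant a) \<le> norm a * A" for a
    using abs_majorant_le[of a] by (simp add: mult.commute)
qed

lemma onorm_majorant_le: "onorm majorant \<le> A"
  using abs_majorant_le A_nonneg by (intro onorm_bound) (simp_all add: mult.commute)

lemma sum_abs_extension_le: "(\<Sum>n<N. \<bar>extension u n\<bar>) \<le> majorant (labs u)"
proof -
  define v where "v n = (if 0 \<le> extension u n then u else - u)" for n
  have "(\<Sum>n<N. \<bar>extension u n\<bar>) = (\<Sum>n<N. extension (v n) n)"
    using extension_linear[of "-1" u 0 u] by (intro sum.cong) (auto simp: v_def)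
  also have "\<dots> \<le> majorant (labs u)"
    by (rule diag_sum_le_majorant) (simp_all add: v_def labs_nonneg)
  finally show ?thesis .
qed

lemma l1_op_extension: "l1_op UNIV extension"
  unfolding l1_op_def
proof (intro conjI ballI allI exI)
  show "summable (\<lambda>n. \<bar>extension u n\<bar>)" for u
    by (rule summableI_nonneg_bounded[OF _ sum_abs_extension_le]) simp
  have "(\<Sum>n<N. \<bar>extension u n\<bar>) \<le> A * norm u" for u N
    using sum_abs_extension_le[where N = N and u = u] abs_majorant_le[of "labs u"] by simp
  then show "l1norm (extension u) \<le> A * norm u" for u
    unfolding l1norm_def by (rule suminf_le_const[OF \<open>summable (\<lambda>n. \<bar>extension u n\<bar>)\<close>])
  show "extension (a *\<^sub>R u + b *\<^sub>R v) = (\<lambda>n. a * extension u n + b * extension v n)" for u v a b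
    by (simp add: extension_linear fun_eq_iff)
qed

lemma dual_ob_majorant_extension: "dual_ob_majorant (l1_adjoint extension) majorant"
  unfolding dual_ob_majorant_def dual_space_def dual_le_def
proof (intro conjI allI impI CollectI)
  show "bounded_linear majorant"
    by (rule bounded_linear_majorant)
  show "0 \<le> w \<Longrightarrow> 0 \<le> majorant w" for w
    by (rule majorant_nonneg)
  fix h :: linf and w :: 'l
  assume "0 \<le> w"
  have "l1_adjoint extension h u \<le> norm h * majorant w" if u: "labs u \<le> w" for u
    unfolding l1_adjoint_def
  proof (rule suminf_le_const)
    show "summable (\<lambda>n. apply_bcontfun h n * extension u n)"
      by (rule summable_bcontfun_mult[OF l1_op_summable[OF l1_op_extension UNIV_I]])
    fix N
    have "labs (apply_bcontfun h n *\<^sub>R u) \<le> norm h *\<^sub>R w" for n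
      using u norm_bounded[of h n] by (intro labs_scaleR_le_scaleR) simp_all
    then have "(\<Sum>n<N. extension (apply_bcontfun h n *\<^sub>R u) n) \<le> majorant (norm h *\<^sub>R w)"
      using \<open>0 \<le> w\<close> by (intro diag_sum_le_majorant) (simp_all add: scaleR_nonneg_nonneg)
    moreover have "extension (apply_bcontfun h n *\<^sub>R u) n = apply_bcontfun h n * extension u n" for n
      using extension_linear[of "apply_bcontfun h n" u 0 u n] by simp
    moreover have "majorant (norm h *\<^sub>R w) = norm h * majorant w"
      using linear_scale[OF bounded_linear.linear[OF bounded_linear_majorant]] by simp
    ultimately show "(\<Sum>n<N. apply_bcontfun h n * extension u n) \<le> norm h * majorant w"
      by simp
  qed
  then have "dual_abs_pos (l1_adjoint extension h) w \<le> norm h * majorant w"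
    by (rule dual_abs_pos_least[OF \<open>0 \<le> w\<close>])
  then show "dual_abs (l1_adjoint extension h) w \<le> norm h * majorant w"
    by (simp add: dual_abs_of_nonneg[of w "l1_adjoint extension h", OF \<open>0 \<le> w\<close> l1_adjoint_0[OF l1_op_extension]])
qed

end

lemma exists_dominated_functional_extending:
  fixes J :: "'x::real_normed_vector \<Rightarrow> 'l::banach_lattice" and T :: "'l \<Rightarrow> nat \<Rightarrow> real"
  assumes J: "linear J" and T: "l1_op (range J) T" and S: "l1_op UNIV (T \<circ> J)"
    and J_alpha: "\<And>k (y :: nat \<Rightarrow> 'x). k \<ge> 1 \<Longrightarrow>
      \<alpha> (tensor (map (\<lambda>j. (unit_vec j, y j)) [0..<k])) \<le> norm (Sup_fin ((\<lambda>j. labs (J (y j))) ` {..<k}))"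
    and A: "0 \<le> A" "\<And>l. tpair (T \<circ> J) l \<le> A * \<alpha> (tensor l)"
  obtains g where "dominated_functional g A"
    "\<And>u. u \<in> range J \<Longrightarrow> dominated_functional.extension g u = T u"
proof -
  have U: "subspace (range J)"
    using linear_subspace_image[OF J subspace_UNIV] .
  have p_add: "A * excess_norm (x + y) \<le> A * excess_norm x + A * excess_norm y"
    if "x \<in> fin_supp_pairs" "y \<in> fin_supp_pairs" for x y :: "(nat \<Rightarrow>\<^sub>C 'l) \<times> 'l"
    using mult_left_mono[OF excess_norm_add[OF that] A(1)] by (simp add: distrib_left)
  have p_scale: "A * excess_norm (c *\<^sub>R x) \<le> c * (A * excess_norm x)"
    if "x \<in> fin_supp_pairs" "0 < c" for x :: "(nat \<Rightarrow>\<^sub>C 'l) \<times> 'l" and c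
    using mult_left_mono[OF excess_norm_scaleR[OF that(1) less_imp_le[OF that(2)]] A(1)]
    by (simp add: mult.left_commute)
  have f_add: "diagonal_pairing T (x + y) = diagonal_pairing T x + diagonal_pairing T y"
    if "x \<in> diagonal_domain (range J)" "y \<in> diagonal_domain (range J)" for x y
    using diagonal_pairing_linear[OF U T that, of 1 1] by simp
  have f_scale: "diagonal_pairing T (c *\<^sub>R x) = c * diagonal_pairing T x"
    if "x \<in> diagonal_domain (range J)" for x c
    using diagonal_pairing_linear[OF U T that that, of c 0] by simp
  obtain g where g_diag: "\<And>x. x \<in> diagonal_domain (range J) \<Longrightarrow> g x = diagonal_pairing T x"
    and g_dom: "\<And>x. x \<in> fin_supp_pairs \<Longrightarrow> g x \<le> A * excess_norm x"
    and g_add: "\<And>x y. x \<in> fin_supp_pairs \<Longrightarrow> y \<in> fin_supp_pairs \<Longrightarrow> g (x + y) = g x + g y"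
    and g_scale: "\<And>x c. x \<in> fin_supp_pairs \<Longrightarrow> g (c *\<^sub>R x) = c * g x"
    using hahn_banach_dominated_extension[OF subspace_fin_supp_pairs p_add p_scale
        subspace_diagonal_domain[OF U] diagonal_domain_subset f_add f_scale
        diagonal_pairing_le_excess_norm[OF J T S J_alpha A]] by blast
  interpret dominated_functional g A
    using A(1) g_add g_scale g_dom by unfold_locales
  have "extension u = T u" if "u \<in> range J" for u
  proof
    fix n
    have "(seq_single n u, 0) \<in> diagonal_domain (range J)"
      using that subspace_0[OF U] unfolding diagonal_domain_def by (simp add: fsupp_seq_single seq_single_apply)
    then show "extension u n = T u n"
      unfolding extension_def using g_diag diagonal_pairing_seq_single[OF U T that] by simp
  qed
  then show ?thesis
    using that dominated_functional_axioms by blast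
qed

theorem corollary1p9:
  fixes \<alpha> :: "(nat \<Rightarrow> 'x::banach) \<Rightarrow> real"
    and J :: "'x \<Rightarrow> 'l::banach_lattice"
    and T :: "'l \<Rightarrow> nat \<Rightarrow> real"
  assumes alpha: "left_tensorial \<alpha>"
    and J_lin: "linear J"
    and J_iso: "\<And>x. norm (J x) = norm x"
    and J_alpha: "\<And>k (y :: nat \<Rightarrow> 'x). k \<ge> 1 \<Longrightarrow>
        norm (Sup_fin ((\<lambda>j. labs (J (y j))) ` {..<k}))
          = \<alpha> (tensor (map (\<lambda>j. (unit_vec j, y j)) [0..<k]))"
    and T_op: "l1_op (range J) T"
    and TJ_dual: "in_alpha_dual \<alpha> (T \<circ> J)"
  shows "\<exists>T'. l1_op UNIV T' \<and> (\<forall>u\<in>range J. T' u = T u) \<and>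
           dual_order_bounded (l1_adjoint T') \<and>
           dual_mnorm (l1_adjoint T') = alpha_dual \<alpha> (T \<circ> J)"
proof -
  define A where "A = alpha_dual \<alpha> (T \<circ> J)"
  have "bounded_linear J"
    using J_lin J_iso unfolding bounded_linear_def bounded_linear_axioms_def by (auto intro: exI[of _ 1])
  then have S: "l1_op UNIV (T \<circ> J)"
    using T_op by (rule l1_op_comp_bounded_linear)
  note \<alpha> = left_tensorial_imp_tensor_norm[OF alpha]
  have A: "0 \<le> A" "\<And>l. tpair (T \<circ> J) l \<le> A * \<alpha> (tensor l)"
    unfolding A_def using alpha_dual_nonneg[OF \<alpha> S TJ_dual] abs_tpair_le_alpha_dual[OF \<alpha> S TJ_dual]
    by (auto intro: abs_le_D1 order_trans)
  obtain g where "dominated_functional g A"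
    and extends: "\<And>u. u \<in> range J \<Longrightarrow> dominated_functional.extension g u = T u"
    using exists_dominated_functional_extending[OF J_lin T_op S J_alpha[THEN sym, THEN eq_refl] A] by blast
  interpret dominated_functional g A
    by fact
  have "A \<le> onorm z" if z: "dual_ob_majorant (l1_adjoint extension) z" for z
  proof -
    have "\<bar>tpair (T \<circ> J) l\<bar> \<le> onorm z * \<alpha> (tensor l)" for l
      using extends[OF rangeI] by (intro abs_tpair_le_majorant[OF alpha J_alpha[THEN eq_refl] S _ l1_op_extension z]) auto
    then show ?thesis
      unfolding A_def by (rule alpha_dual_le[OF \<alpha> _ onorm_pos_le[OF dual_ob_majorantD(1)[OF z]]])
  qed
  then have "dual_mnorm (l1_adjoint extension) = A"
    by (rule dual_mnorm_eqI[OF dual_ob_majorant_extension onorm_majorant_le])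
  then show ?thesis
    using l1_op_extension extends dual_ob_majorant_extension
    unfolding A_def dual_order_bounded_def by blast
qed

end
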